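(* Let $\mathbf{k}$ be a field, $p\ge3$, $S=\mathbf{k}[e_1,\dots,e_{2p}]$, and let $\mathcal{F}$, $\mathcal{G}$ and $\varphi=(\varphi_i)_{i\ge0}:\mathcal{F}\to\mathcal{G}$ be as defined below. Then $\varphi$ is a map of chain complexes.
   Context: Let $V=\operatorname{span}_{\mathbf{k}}(e_1,\dots,e_{p-1})$, $W=\operatorname{span}_{\mathbf{k}}(e_{p+1},\dots,e_{2p-1})$; for $v\in V$ let $v'\in W$ be its image under $e_i\mapsto e_{p+i}$. For $U\in\{V,W\}$, $\partial^U:S\otimes\bigwedge^kU\to S\otimes\bigwedge^{k-1}U$ is $s\otimes u_1\wedge\cdots\wedge u_k\mapsto\sum_l(-1)^lsu_l\otimes u_1\wedge\cdots\widehat{u_l}\cdots\wedge u_k$. $\mathcal{F}$: $C_{a,b}=S\otimes\bigwedge^{a+2}V\otimes\bigwedge^bW$ ($a,b\ge0$), $\partial^h=\partial^V\otimes1:C_{a,b}\to C_{a-1,b}$ (zero if $a=0$), $\partial^v(s\otimes\omega\otimes w_1\wedge\cdots\wedge w_b)=(-1)^a\sum_l(-1)^lsw_l\otimes\omega\otimes w_1\wedge\cdots\widehat{w_l}\cdots\wedge w_b$; $\mathcal{F}_n=\bigoplus_{a+b=n}C_{a,b}$ with differential $\partial^h+\partial^v$. $\mathcal{G}$: for $i\ge1$, $M_i=(\bigwedge^iW\otimes W)/D_i$ where $D_i$ is spanned by $\sum_{l=1}^{i+1}(-1)^l(w_1\wedge\cdots\widehat{w_l}\cdots\wedge w_{i+1})\otimes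 w_l$; classes written $[\eta\otimes w]$. $\mathcal{G}_0=S$, $\mathcal{G}_i=S\otimes M_i$, differential $s\otimes[(w_1\wedge\cdots\wedge w_i)\otimes w]\mapsto\sum_l(-1)^lsw_l\otimes[(w_1\wedge\cdots\widehat{w_l}\cdots\wedge w_i)\otimes w]$ for $i\ge2$ and $s\otimes[w_1\otimes w]\mapsto-sw_1w$ for $i=1$ ($M_i\cong\mathbb{S}^{(2,1^{i-1})}W$; $\mathcal{G}$ resolves $S/\langle e_{p+1},\dots,e_{2p-1}\rangle^2$). $\varphi$: zero on $C_{a,b}$ for $a\ge1$; $\varphi_0(s\otimes v_1\wedge v_2)=s(v_1v_2'-v_2v_1')$ on $C_{0,0}$; $\varphi_i(s\otimes v_1\wedge v_2\otimes\eta)=sv_1\otimes[\eta\otimes v_2']-sv_2\otimes[\eta\otimes v_1']$ on $C_{0,i}$, $i\ge1$. *)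

theory Defs
  imports Main "HOL-Library.Poly_Mapping" "HOL-Library.Function_Algebras"
begin

text \<open>The polynomial ring k[e_i : i in nat]; S = k[e_1,...,e_2p] is the subring cut out by inS.\<close>
type_synonym 'k mpoly = "(nat \<Rightarrow>\<^sub>0 nat) \<Rightarrow>\<^sub>0 'k"

definition var :: "nat \<Rightarrow> 'k::field mpoly" where
  "var i = Poly_Mapping.single (Poly_Mapping.single i 1) 1"

definition mono_ok :: "nat \<Rightarrow> (nat \<Rightarrow>\<^sub>0 nat) \<Rightarrow> bool" where
  "mono_ok p m \<longleftrightarrow> Poly_Mapping.keys m \<subseteq> {1..2*p}"

definition inS :: "nat \<Rightarrow> 'k::field mpoly \<Rightarrow> bool" where
  "inS p s \<longleftrightarrow> (\<forall>m \<in> Poly_Mapping.keys s. mono_ok p m)"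

definition Vidx :: "nat \<Rightarrow> nat set" where "Vidx p = {1..p-1}"
definition Widx :: "nat \<Rightarrow> nat set" where "Widx p = {p+1..2*p-1}"

text \<open>Basis wedges e_A are taken with indices in increasing order; the sign (-1)^l of
  the l-th factor (l counted from 1).\<close>
definition sgn_at :: "nat set \<Rightarrow> nat \<Rightarrow> 'k::field mpoly" where
  "sgn_at A x = (-1) ^ Suc (card {y\<in>A. y < x})"

definition unitv :: "'b \<Rightarrow> 'r::zero \<Rightarrow> 'b \<Rightarrow> 'r" where
  "unitv b c = (\<lambda>b'. if b' = b then c else 0)"

definition scal :: "'r::times \<Rightarrow> ('b \<Rightarrow> 'r) \<Rightarrow> 'b \<Rightarrow> 'r" where
  "scal c f = (\<lambda>b. c * f b)"

text \<open>Complex F: basis element (A,B) stands for e_A (x) e_B in C_{a,b}, a = card A - 2, b = card B.\<close>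
definition Fall :: "nat \<Rightarrow> (nat set \<times> nat set) set" where
  "Fall p = Pow (Vidx p) \<times> Pow (Widx p)"

definition Fbasis :: "nat \<Rightarrow> nat \<Rightarrow> (nat set \<times> nat set) set" where
  "Fbasis p n = {(A,B). A \<subseteq> Vidx p \<and> B \<subseteq> Widx p \<and> 2 \<le> card A \<and> card A + card B = n + 2}"

definition dF_basis :: "nat set \<Rightarrow> nat set \<Rightarrow> nat set \<times> nat set \<Rightarrow> 'k::field mpoly" where
  "dF_basis A B =
     (if card A \<le> 2 then 0 else (\<Sum>x\<in>A. unitv (A - {x}, B) (sgn_at A x * var x)))
     + scal ((-1) ^ (card A - 2)) (\<Sum>y\<in>B. unitv (A, B - {y}) (sgn_at B y * var y))"

definition dF :: "nat \<Rightarrow> (nat set \<times> nat set \<Rightarrow> 'k::field mpoly) \<Rightarrow> nat set \<times> nat set \<Rightarrow> 'k mpoly" where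
  "dF p f = (\<Sum>(A,B)\<in>Fall p. scal (f (A,B)) (dF_basis A B))"

text \<open>Complex G: G_0 = S; an element of G_i (i>=1) is represented by an element of
  S (x) (wedge^i W (x) W), basis (B,j) = e_B (x) e_j, taken modulo S (x) D_i.\<close>
definition Gall :: "nat \<Rightarrow> (nat set \<times> nat) set" where
  "Gall p = Pow (Widx p) \<times> Widx p"

definition dG1 :: "nat \<Rightarrow> (nat set \<times> nat \<Rightarrow> 'k::field mpoly) \<Rightarrow> 'k mpoly" where
  "dG1 p g = (\<Sum>(B,j)\<in>Gall p. g (B,j) * (if card B = 1 then - (var (the_elem B) * var j) else 0))"

definition dG :: "nat \<Rightarrow> (nat set \<times> nat \<Rightarrow> 'k::field mpoly) \<Rightarrow> nat set \<times> nat \<Rightarrow> 'k mpoly" where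
  "dG p g = (\<Sum>(B,j)\<in>Gall p. scal (g (B,j)) (\<Sum>y\<in>B. unitv (B - {y}, j) (sgn_at B y * var y)))"

definition Dgen :: "nat set \<Rightarrow> nat set \<times> nat \<Rightarrow> 'k::field mpoly" where
  "Dgen C = (\<Sum>y\<in>C. unitv (C - {y}, y) (sgn_at C y))"

definition Dspan :: "nat \<Rightarrow> nat \<Rightarrow> (nat set \<times> nat \<Rightarrow> 'k::field mpoly) set" where
  "Dspan p i = {(\<Sum>C\<in>{C. C \<subseteq> Widx p \<and> card C = Suc i}. scal (c C) (Dgen C)) | c. \<forall>C. inS p (c C)}"

definition phi0 :: "nat \<Rightarrow> (nat set \<times> nat set \<Rightarrow> 'k::field mpoly) \<Rightarrow> 'k mpoly" where
  "phi0 p f = (\<Sum>(A,B)\<in>Fall p. f (A,B) *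
      (if card A = 2 \<and> B = {}
       then var (Min A) * var (Max A + p) - var (Max A) * var (Min A + p) else 0))"

definition phi_basis :: "nat \<Rightarrow> nat set \<Rightarrow> nat set \<Rightarrow> nat set \<times> nat \<Rightarrow> 'k::field mpoly" where
  "phi_basis p A B = (if card A = 2 \<and> B \<noteq> {}
      then unitv (B, Max A + p) (var (Min A)) - unitv (B, Min A + p) (var (Max A)) else 0)"

definition phi :: "nat \<Rightarrow> (nat set \<times> nat set \<Rightarrow> 'k::field mpoly) \<Rightarrow> nat set \<times> nat \<Rightarrow> 'k mpoly" where
  "phi p f = (\<Sum>(A,B)\<in>Fall p. scal (f (A,B)) (phi_basis p A B))"

end

theory Submission
  imports Defs
begin

text \<open>
  Both composites are linear in the coefficients, so it suffices to compare them on a basis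
  element e_A (x) e_B of F, where card A = a + 2. Only card A = 2 meets the support of phi, and
  there phi commutes with the vertical differential term by term. For card A = 3, phi after the
  horizontal differential gives a sum that vanishes by the Koszul relation
  a (b c' - c b') - b (a c' - c a') + c (a b' - b a') = 0, and for card A >= 4 everything stays
  outside the support of phi. Hence the square commutes already on representatives in
  S (x) wedge^i W (x) W, before passing to the quotient by D_i.
\<close>

lemma sum_apply: "(\<Sum>i\<in>I. F i) x = (\<Sum>i\<in>I. F i x)"
  by (induction I rule: infinite_finite_induct) auto

lemma scal_0 [simp]: "scal 0 g = (0 :: _ \<Rightarrow> 'r::comm_ring_1)"
  by (simp add: scal_def fun_eq_iff)

lemma scal_0_right [simp]: "scal c 0 = (0 :: _ \<Rightarrow> 'r::comm_ring_1)"
  by (simp add: scal_def fun_eq_iff)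

lemma scal_1 [simp]: "scal 1 g = (g :: _ \<Rightarrow> 'r::comm_ring_1)"
  by (simp add: scal_def)

definition lin_ext :: "'b set \<Rightarrow> ('b \<Rightarrow> 'c \<Rightarrow> 'r::comm_ring_1) \<Rightarrow> ('b \<Rightarrow> 'r) \<Rightarrow> 'c \<Rightarrow> 'r" where
  "lin_ext X K g = (\<Sum>b\<in>X. scal (g b) (K b))"

definition lin_form :: "'b set \<Rightarrow> ('b \<Rightarrow> 'r::comm_ring_1) \<Rightarrow> ('b \<Rightarrow> 'r) \<Rightarrow> 'r" where
  "lin_form X K g = (\<Sum>b\<in>X. g b * K b)"

lemma lin_ext_zero [simp]: "lin_ext X K 0 = 0"
  by (simp add: lin_ext_def fun_eq_iff sum_apply)

lemma lin_ext_add: "lin_ext X K (g + h) = lin_ext X K g + lin_ext X K h"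
  by (simp add: lin_ext_def scal_def fun_eq_iff sum_apply distrib_right sum.distrib)

lemma lin_ext_diff: "lin_ext X K (g - h) = lin_ext X K g - lin_ext X K h"
  by (simp add: lin_ext_def scal_def fun_eq_iff sum_apply left_diff_distrib sum_subtractf)

lemma lin_ext_scal: "lin_ext X K (scal c g) = scal c (lin_ext X K g)"
  by (simp add: lin_ext_def scal_def fun_eq_iff sum_apply sum_distrib_left mult.assoc)

lemma lin_ext_sum: "lin_ext X K (\<Sum>i\<in>I. g i) = (\<Sum>i\<in>I. lin_ext X K (g i))"
  by (induction I rule: infinite_finite_induct) (simp_all only: sum.infinite sum.empty
      sum.insert lin_ext_add lin_ext_zero simp_thms)

lemma lin_ext_unitv: "b \<in> X \<Longrightarrow> finite X \<Longrightarrow> lin_ext X K (unitv b c) = scal c (K b)"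
  by (simp add: lin_ext_def unitv_def scal_def fun_eq_iff sum_apply
      if_distrib[of "\<lambda>u. u * _"] sum.delta' cong: if_cong)

lemma lin_ext_lin_ext:
  "lin_ext X K (lin_ext Y L g) = lin_ext Y (\<lambda>b. lin_ext X K (L b)) g"
  by (simp add: lin_ext_def[of Y] lin_ext_sum lin_ext_scal)

lemma lin_ext_cong:
  "(\<And>b. b \<in> X \<Longrightarrow> g b \<noteq> 0 \<Longrightarrow> K b = L b) \<Longrightarrow> lin_ext X K g = lin_ext X L g"
  unfolding lin_ext_def by (intro sum.cong refl) (metis scal_0)

lemma lin_form_zero [simp]: "lin_form X K 0 = 0"
  by (simp add: lin_form_def)

lemma lin_form_add: "lin_form X K (g + h) = lin_form X K g + lin_form X K h"
  by (simp add: lin_form_def distrib_right sum.distrib)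

lemma lin_form_diff: "lin_form X K (g - h) = lin_form X K g - lin_form X K h"
  by (simp add: lin_form_def left_diff_distrib sum_subtractf)

lemma lin_form_scal: "lin_form X K (scal c g) = c * lin_form X K g"
  by (simp add: lin_form_def scal_def sum_distrib_left mult.assoc)

lemma lin_form_sum: "lin_form X K (\<Sum>i\<in>I. g i) = (\<Sum>i\<in>I. lin_form X K (g i))"
  by (induction I rule: infinite_finite_induct) (simp_all only: sum.infinite sum.empty
      sum.insert lin_form_add lin_form_zero simp_thms)

lemma lin_form_unitv: "b \<in> X \<Longrightarrow> finite X \<Longrightarrow> lin_form X K (unitv b c) = c * K b"
  by (simp add: lin_form_def unitv_def if_distrib[of "\<lambda>u. u * _"] sum.delta' cong: if_cong)

lemma lin_form_lin_ext:
  "lin_form X K (lin_ext Y L g) = lin_form Y (\<lambda>b. lin_form X K (L b)) g"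
  by (simp add: lin_ext_def lin_form_def[of Y] lin_form_sum lin_form_scal)

lemma lin_form_cong:
  "(\<And>b. b \<in> X \<Longrightarrow> g b \<noteq> 0 \<Longrightarrow> K b = L b) \<Longrightarrow> lin_form X K g = lin_form X L g"
  unfolding lin_form_def by (intro sum.cong refl) (metis mult_zero_left)

definition dG_basis :: "nat set \<Rightarrow> nat \<Rightarrow> nat set \<times> nat \<Rightarrow> 'k::field mpoly" where
  "dG_basis B j = (\<Sum>y\<in>B. unitv (B - {y}, j) (sgn_at B y * var y))"

definition dG1_basis :: "nat set \<Rightarrow> nat \<Rightarrow> 'k::field mpoly" where
  "dG1_basis B j = (if card B = 1 then - (var (the_elem B) * var j) else 0)"

definition phi0_basis :: "nat \<Rightarrow> nat set \<Rightarrow> nat set \<Rightarrow> 'k::field mpoly" where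
  "phi0_basis p A B = (if card A = 2 \<and> B = {}
     then var (Min A) * var (Max A + p) - var (Max A) * var (Min A + p) else 0)"

lemma dF_eq_lin_ext: "dF p = lin_ext (Fall p) (case_prod dF_basis)"
  by (simp add: dF_def lin_ext_def fun_eq_iff case_prod_beta')

lemma phi_eq_lin_ext: "phi p = lin_ext (Fall p) (case_prod (phi_basis p))"
  by (simp add: phi_def lin_ext_def fun_eq_iff case_prod_beta')

lemma dG_eq_lin_ext: "dG p = lin_ext (Gall p) (case_prod dG_basis)"
  by (simp add: dG_def dG_basis_def lin_ext_def fun_eq_iff case_prod_beta')

lemma phi0_eq_lin_form: "phi0 p = lin_form (Fall p) (case_prod (phi0_basis p))"
  by (simp add: phi0_def phi0_basis_def lin_form_def fun_eq_iff case_prod_beta')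

lemma dG1_eq_lin_form: "dG1 p = lin_form (Gall p) (case_prod dG1_basis)"
  by (simp add: dG1_def dG1_basis_def lin_form_def fun_eq_iff case_prod_beta')

lemma finite_Fall: "finite (Fall p)"
  by (simp add: Fall_def Vidx_def Widx_def)

lemma finite_Gall: "finite (Gall p)"
  by (simp add: Gall_def Widx_def)

lemma Min_Max_shift_in_Widx:
  assumes "A \<subseteq> Vidx p" "A \<noteq> {}"
  shows "Min A + p \<in> Widx p" "Max A + p \<in> Widx p"
proof -
  have "finite A"
    using assms(1) finite_subset by (auto simp: Vidx_def)
  then have "Min A \<in> Vidx p" "Max A \<in> Vidx p"
    using assms by (auto intro: Min_in Max_in)
  then show "Min A + p \<in> Widx p" "Max A + p \<in> Widx p"
    by (auto simp: Vidx_def Widx_def)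
qed

lemma card_3_obtain_sorted:
  fixes A :: "nat set"
  assumes "card A = 3"
  obtains a b c where "A = {a, b, c}" "a < b" "b < c"
proof -
  have "length (sorted_list_of_set A) = 3"
    using assms by simp
  then obtain a b c where abc: "sorted_list_of_set A = [a, b, c]"
    by (auto simp: numeral_3_eq_3 length_Suc_conv simp del: length_sorted_list_of_set)
  have "finite A"
    using assms card.infinite by force
  then have "A = {a, b, c}"
    by (metis abc set_sorted_list_of_set empty_set list.simps(15))
  moreover have "sorted_wrt (<) [a, b, c]"
    by (metis abc strict_sorted_list_of_set)
  ultimately show thesis
    using that by simp
qed

lemma sgn_at_three:
  fixes a b c :: nat
  assumes "a < b" "b < c"
  shows "sgn_at {a, b, c} a = (-1 :: 'k::field mpoly)" "sgn_at {a, b, c} b = (1 :: 'k mpoly)"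
    "sgn_at {a, b, c} c = (-1 :: 'k mpoly)"
proof -
  have below: "{y \<in> {a, b, c}. y < a} = {}" "{y \<in> {a, b, c}. y < b} = {a}"
    "{y \<in> {a, b, c}. y < c} = {a, b}"
    using assms by auto
  show "sgn_at {a, b, c} a = (-1 :: 'k mpoly)" "sgn_at {a, b, c} b = (1 :: 'k mpoly)"
    "sgn_at {a, b, c} c = (-1 :: 'k mpoly)"
    unfolding sgn_at_def below using assms by simp_all
qed

lemma phi_basis_pair:
  "x < y \<Longrightarrow> phi_basis p {x, y} B =
     (if B = {} then 0 else unitv (B, y + p) (var x) - unitv (B, x + p) (var y))"
  by (simp add: phi_basis_def min_def max_def)

lemma phi0_basis_pair:
  "x < y \<Longrightarrow> phi0_basis p {x, y} {} = var x * var (y + p) - var y * var (x + p)"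
  by (simp add: phi0_basis_def min_def max_def)

lemma phi_basis_koszul:
  assumes "a < b" "b < c"
  shows "(\<Sum>x\<in>{a, b, c}. scal (sgn_at {a, b, c} x * var x) (phi_basis p ({a, b, c} - {x}) B))
    = (0 :: _ \<Rightarrow> 'k::field mpoly)"
proof -
  have "{a, b, c} - {a} = {b, c}" "{a, b, c} - {b} = {a, c}" "{a, b, c} - {c} = {a, b}"
    using assms by auto
  with assms show ?thesis
    by (simp add: sgn_at_three phi_basis_pair scal_def unitv_def fun_eq_iff algebra_simps
        del: insert_Diff_if)
qed

lemma phi0_basis_koszul:
  assumes "a < b" "b < c"
  shows "(\<Sum>x\<in>{a, b, c}. sgn_at {a, b, c} x * var x * phi0_basis p ({a, b, c} - {x}) {})
    = (0 :: 'k::field mpoly)"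
proof -
  have "{a, b, c} - {a} = {b, c}" "{a, b, c} - {b} = {a, c}" "{a, b, c} - {c} = {a, b}"
    using assms by auto
  with assms show ?thesis
    by (simp add: sgn_at_three phi0_basis_pair algebra_simps del: insert_Diff_if)
qed

lemma phi_dF_basis:
  assumes "A \<subseteq> Vidx p" "B \<subseteq> Widx p"
  shows "phi p (dF_basis A B) =
      (if card A \<le> 2 then 0 else \<Sum>x\<in>A. scal (sgn_at A x * var x) (phi_basis p (A - {x}) B))
    + scal ((-1) ^ (card A - 2)) (\<Sum>y\<in>B. scal (sgn_at B y * var y) (phi_basis p A (B - {y})))"
proof -
  have "(A - {x}, B) \<in> Fall p" "(A, B - {x}) \<in> Fall p" for x
    using assms by (auto simp: Fall_def)
  then show ?thesis
    by (simp add: dF_basis_def phi_eq_lin_ext lin_ext_add lin_ext_scal lin_ext_sum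
        lin_ext_unitv finite_Fall)
qed

lemma phi0_dF_basis:
  assumes "A \<subseteq> Vidx p" "B \<subseteq> Widx p"
  shows "phi0 p (dF_basis A B) =
      (if card A \<le> 2 then 0 else \<Sum>x\<in>A. sgn_at A x * var x * phi0_basis p (A - {x}) B)
    + (-1) ^ (card A - 2) * (\<Sum>y\<in>B. sgn_at B y * var y * phi0_basis p A (B - {y}))"
proof -
  have "(A - {x}, B) \<in> Fall p" "(A, B - {x}) \<in> Fall p" for x
    using assms by (auto simp: Fall_def)
  then show ?thesis
    by (simp add: dF_basis_def phi0_eq_lin_form lin_form_add lin_form_scal lin_form_sum
        lin_form_unitv finite_Fall)
qed

lemma phi_dF_basis_eq_0:
  assumes A: "A \<subseteq> Vidx p" "3 \<le> card A" and B: "B \<subseteq> Widx p"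
  shows "phi p (dF_basis A B) = 0"
proof -
  have horizontal: "(\<Sum>x\<in>A. scal (sgn_at A x * var x) (phi_basis p (A - {x}) B)) = 0"
  proof (cases "card A = 3")
    case True
    then obtain a b c where "A = {a, b, c}" "a < b" "b < c"
      by (rule card_3_obtain_sorted)
    then show ?thesis
      using phi_basis_koszul by blast
  next
    case False
    have "finite A"
      using A(2) card.infinite by force
    with A(2) False have "card (A - {x}) \<noteq> 2" if "x \<in> A" for x
      using that by simp
    then show ?thesis
      by (simp add: phi_basis_def)
  qed
  have vertical: "phi_basis p A (B - {y}) = 0" for y
    using A(2) by (simp add: phi_basis_def)
  show ?thesis
    using A B by (simp add: phi_dF_basis horizontal vertical)
qed

lemma phi_dF_basis_card_2:
  assumes A: "A \<subseteq> Vidx p" "card A = 2" and B: "B \<subseteq> Widx p" "2 \<le> card B"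
  shows "phi p (dF_basis A B) = dG p (phi_basis p A B)"
proof -
  let ?m = "Min A" and ?M = "Max A"
  have "A \<noteq> {}"
    using A(2) by auto
  then have "?m + p \<in> Widx p" "?M + p \<in> Widx p"
    by (rule Min_Max_shift_in_Widx[OF A(1)])+
  then have in_Gall: "(B, ?m + p) \<in> Gall p" "(B, ?M + p) \<in> Gall p"
    using B(1) by (auto simp: Gall_def)
  have B_not_singleton: "\<not> B \<subseteq> {y}" for y
  proof
    assume "B \<subseteq> {y}"
    then have "card B \<le> card {y}"
      using card_mono[of "{y}" B] by simp
    with B(2) show False
      by simp
  qed
  then have B_ne: "B \<noteq> {}"
    by auto
  have "phi p (dF_basis A B) = (\<Sum>y\<in>B. scal (sgn_at B y * var y)
      (unitv (B - {y}, ?M + p) (var ?m) - unitv (B - {y}, ?m + p) (var ?M)))"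
    using A B by (simp add: phi_dF_basis phi_basis_def B_ne B_not_singleton)
  also have "\<dots> = scal (var ?m) (dG_basis B (?M + p)) - scal (var ?M) (dG_basis B (?m + p))"
    by (auto simp: dG_basis_def fun_eq_iff sum_apply scal_def unitv_def sum_distrib_left
        sum_subtractf[symmetric] intro!: sum.cong)
  also have "\<dots> = dG p (phi_basis p A B)"
    using A(2) in_Gall
    by (simp add: phi_basis_def B_ne dG_eq_lin_ext lin_ext_diff lin_ext_unitv finite_Gall)
  finally show ?thesis .
qed

lemma phi0_dF_basis_card_3:
  assumes "A \<subseteq> Vidx p" "card A = 3"
  shows "phi0 p (dF_basis A {}) = 0"
proof -
  obtain a b c where "A = {a, b, c}" "a < b" "b < c"
    using assms(2) by (rule card_3_obtain_sorted)
  then show ?thesis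
    using assms phi0_basis_koszul by (simp add: phi0_dF_basis)
qed

lemma phi0_dF_basis_card_2:
  assumes A: "A \<subseteq> Vidx p" "card A = 2" and w: "w \<in> Widx p"
  shows "phi0 p (dF_basis A {w}) = dG1 p (phi_basis p A {w} :: _ \<Rightarrow> 'k::field mpoly)"
proof -
  have "A \<noteq> {}"
    using A(2) by auto
  then have in_Gall: "({w}, Min A + p) \<in> Gall p" "({w}, Max A + p) \<in> Gall p"
    using Min_Max_shift_in_Widx[OF A(1)] w by (auto simp: Gall_def)
  have "{y \<in> {w}. y < w} = {}"
    by auto
  then have sgn: "sgn_at {w} w = (-1 :: 'k mpoly)"
    unfolding sgn_at_def by (simp only:) simp
  show ?thesis
    using A w in_Gall sgn
    by (simp add: phi0_dF_basis phi0_basis_def phi_basis_def dG1_eq_lin_form lin_form_diff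
        lin_form_unitv finite_Gall dG1_basis_def algebra_simps)
qed

lemma phi_dF_basis_eq_dG_phi_basis:
  assumes "(A, B) \<in> Fbasis p n" "2 \<le> n"
  shows "phi p (dF_basis A B) = dG p (phi_basis p A B :: _ \<Rightarrow> 'k::field mpoly)"
proof -
  have A: "A \<subseteq> Vidx p" "2 \<le> card A" and B: "B \<subseteq> Widx p"
    and card: "card A + card B = n + 2"
    using assms(1) by (auto simp: Fbasis_def)
  show ?thesis
  proof (cases "card A = 2")
    case True
    with card assms(2) have "2 \<le> card B"
      by simp
    with A(1) True B show ?thesis
      by (rule phi_dF_basis_card_2)
  next
    case False
    then have "(phi_basis p A B :: _ \<Rightarrow> 'k mpoly) = 0"
      by (simp add: phi_basis_def)
    with False A B show ?thesis
      by (simp add: phi_dF_basis_eq_0 dG_eq_lin_ext)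
  qed
qed

lemma phi0_dF_basis_eq_dG1_phi_basis:
  assumes "(A, B) \<in> Fbasis p 1"
  shows "phi0 p (dF_basis A B) = dG1 p (phi_basis p A B :: _ \<Rightarrow> 'k::field mpoly)"
proof -
  have A: "A \<subseteq> Vidx p" "2 \<le> card A" and B: "B \<subseteq> Widx p"
    and card: "card A + card B = 3"
    using assms by (auto simp: Fbasis_def)
  have "finite B"
    using B finite_subset by (auto simp: Widx_def)
  from A(2) card consider "card A = 2" "card B = 1" | "card A = 3" "card B = 0"
    by linarith
  then show ?thesis
  proof cases
    case 1
    then obtain w where "B = {w}"
      by (auto simp: card_1_singleton_iff)
    with 1 A B show ?thesis
      by (simp add: phi0_dF_basis_card_2)
  next
    case 2
    with \<open>finite B\<close> A show ?thesis
      by (simp add: phi0_dF_basis_card_3 phi_basis_def dG1_eq_lin_form)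
  qed
qed

lemma phi_dF_eq_dG_phi:
  fixes f :: "nat set \<times> nat set \<Rightarrow> 'k::field mpoly"
  assumes "\<And>A B. f (A, B) \<noteq> 0 \<Longrightarrow> phi p (dF_basis A B) = dG p (phi_basis p A B :: _ \<Rightarrow> 'k mpoly)"
  shows "phi p (dF p f) = dG p (phi p f)"
proof -
  have "phi p (dF p f) = lin_ext (Fall p) (\<lambda>\<beta>. phi p (case_prod dF_basis \<beta>)) f"
    unfolding dF_eq_lin_ext by (simp only: phi_eq_lin_ext lin_ext_lin_ext)
  also have "\<dots> = lin_ext (Fall p) (\<lambda>\<beta>. dG p (case_prod (phi_basis p) \<beta>)) f"
    by (rule lin_ext_cong) (auto simp: assms split: prod.splits)
  also have "\<dots> = dG p (phi p f)"
    unfolding phi_eq_lin_ext[of p] by (simp only: dG_eq_lin_ext lin_ext_lin_ext)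
  finally show ?thesis .
qed

lemma phi0_dF_eq_dG1_phi:
  fixes f :: "nat set \<times> nat set \<Rightarrow> 'k::field mpoly"
  assumes "\<And>A B. f (A, B) \<noteq> 0 \<Longrightarrow> phi0 p (dF_basis A B) = dG1 p (phi_basis p A B :: _ \<Rightarrow> 'k mpoly)"
  shows "phi0 p (dF p f) = dG1 p (phi p f)"
proof -
  have "phi0 p (dF p f) = lin_form (Fall p) (\<lambda>\<beta>. phi0 p (case_prod dF_basis \<beta>)) f"
    unfolding dF_eq_lin_ext by (simp only: phi0_eq_lin_form lin_form_lin_ext)
  also have "\<dots> = lin_form (Fall p) (\<lambda>\<beta>. dG1 p (case_prod (phi_basis p) \<beta>)) f"
    by (rule lin_form_cong) (auto simp: assms split: prod.splits)
  also have "\<dots> = dG1 p (phi p f)"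
    unfolding phi_eq_lin_ext by (simp only: dG1_eq_lin_form lin_form_lin_ext)
  finally show ?thesis .
qed

lemma zero_in_Dspan: "(0 :: _ \<Rightarrow> 'k::field mpoly) \<in> Dspan p i"
  unfolding Dspan_def by (auto intro!: exI[of _ "\<lambda>_. 0"] simp: inS_def)

theorem proposition7p8:
  fixes p n :: nat and f :: "nat set \<times> nat set \<Rightarrow> 'k::field mpoly"
  assumes "3 \<le> p" and "1 \<le> n"
    and "\<forall>\<beta>. f \<beta> \<noteq> 0 \<longrightarrow> \<beta> \<in> Fbasis p n"
    and "\<forall>\<beta>. inS p (f \<beta>)"
  shows "(n = 1 \<longrightarrow> phi0 p (dF p f) = dG1 p (phi p f))
       \<and> (2 \<le> n \<longrightarrow> phi p (dF p f) - dG p (phi p f) \<in> Dspan p (n - 1))"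
proof (intro conjI impI)
  assume "n = 1"
  with assms(3) show "phi0 p (dF p f) = dG1 p (phi p f)"
    by (auto intro!: phi0_dF_eq_dG1_phi phi0_dF_basis_eq_dG1_phi_basis)
next
  assume "2 \<le> n"
  with assms(3) have "phi p (dF p f) = dG p (phi p f)"
    by (auto intro!: phi_dF_eq_dG_phi phi_dF_basis_eq_dG_phi_basis)
  then show "phi p (dF p f) - dG p (phi p f) \<in> Dspan p (n - 1)"
    by (simp add: zero_in_Dspan)
qed

end
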